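(* Consider an incoming approach (queue $i$) of a signalized intersection in the "one+two lane" model. A single shared lane of vehicles splits near the intersection into two dedicated lanes, one for straight-going and one for left-turning vehicles. The traffic light senses whether the head position of each dedicated lane is occupied, so it knows the movements of the (up to two) leading vehicles. A traffic phase $\phi$ gives a green interval of $n$ time slots, with at most one vehicle passing per slot. The possible head configurations are as follows. - Conf. I: the straight-lane head is empty and the two leading vehicles both turn left. - Conf. IV: the left-lane head is empty and the two leading vehicles both go straight. - Conf. II and Conf. III: both heads are occupied, one by a straight-going and one by a left-turning vehicle. Let $g=2$ in Conf. I or IV and $g=1$ in Conf. II or III. Assume: - the phase $\phi$ permits the movement of the $g$ guaranteed leading vehicles, so these $g$ vehicles pass; - the remaining vehicles form a sub-queue of $m=n-g$ positions that behaves as a single lane. In this single lane, vehicles pass one per slot in queue order while the head intends the permitted movement; a head vehicle intending the other movement blocks itself and all vehicles behind it. In the sub-queue, $T\le m$ vehicles are communicating, at sub-queue positions $1\le v_1<\dots<v_T\le m$, with known movements. Each non-communicating sub-queue vehicle independently intends the permitted movement with probability $p_1$ and the other movement with probability $p_2=1-p_1$, where $0<p_1<1$. Set $v_0=1$ and $v_{T+1}=m+1$. Let $K^{\phi}_i$ be the number of vehicles of queue $i$ that pass. If all communicating sub-queue vehicles intend the permitted movement (condition $C_3$), then $$E(K^{\phi}_i)=g+\sum_{l=0}^{T}\frac{p_1^{1-l}}{p_2}\Big((p_1+p_2v_l)p_1^{v_l-1}+(1-2p_1-p_2v_{l+1})p_1^{v_{l+1}-2}\Big)+(n-g)\,p_1^{\,n-g-T}.$$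 If the first communicating sub-queue vehicle not intending the permitted movement is the $L$-th one, at position $v_L$ with $1\le L\le T$ (condition $C_4$), then $$E(K^{\phi}_i)=g+\sum_{l=0}^{L-1}\frac{p_1^{1-l}}{p_2}\Big((p_1+p_2v_l)p_1^{v_l-1}+(1-2p_1-p_2v_{l+1})p_1^{v_{l+1}-2}\Big)+(v_L-1)\,p_1^{\,v_L-L}.$$ In particular, for Conf. I/IV the leading constant is $2$ with $T\le n-2$ and final $C_3$ term $(n-2)p_1^{n-2-T}$; for Conf. II/III it is $1$ with $T\le n-1$ and final $C_3$ term $(n-1)p_1^{n-1-T}$.
   Context: Right-turning vehicles are merged with straight-going ones, so only two movements exist. The expectation is over the random intentions of the non-communicating vehicles in the sub-queue, conditional on the known information. Time index $t$ is suppressed. *)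

theory Defs
  imports Complex_Main "HOL-Library.FuncSet"
begin

datatype conf = ConfI | ConfII | ConfIII | ConfIV

fun g_of :: "conf \<Rightarrow> nat" where
  "g_of ConfI = 2" | "g_of ConfIV = 2" | "g_of ConfII = 1" | "g_of ConfIII = 1"

text \<open>Single-lane sub-queue of m positions 1..m; w j = True iff the vehicle at position j
  intends the permitted movement.\<close>
definition passed :: "nat \<Rightarrow> (nat \<Rightarrow> bool) \<Rightarrow> nat" where
  "passed m w = card {k \<in> {1..m}. \<forall>j\<in>{1..k}. w j}"

definition combine :: "nat set \<Rightarrow> (nat \<Rightarrow> bool) \<Rightarrow> (nat \<Rightarrow> bool) \<Rightarrow> nat \<Rightarrow> bool" where
  "combine V kn a j = (if j \<in> V then kn j else a j)"

definition expected_K :: "nat \<Rightarrow> nat \<Rightarrow> nat set \<Rightarrow> (nat \<Rightarrow> bool) \<Rightarrow> real \<Rightarrow> real" where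
  "expected_K g m V kn p1 =
     (\<Sum>a\<in>PiE ({1..m} - V) (\<lambda>_. UNIV).
        (\<Prod>j\<in>{1..m} - V. if a j then p1 else 1 - p1) *
        real (g + passed m (combine V kn a)))"

end

theory Submission
  imports Defs
begin

text \<open>The expected number of passing sub-queue vehicles is the sum over positions k of the
  probability that vehicle k passes, i.e. that the first k vehicles all intend the permitted
  movement; this is p1 to the number of unknown intentions among them, or 0 once a known
  blocking vehicle lies in front.  Between consecutive communicating vehicles v_l and v_(l+1)
  exactly l of the first k positions are known, so the block contributes a geometric sum of
  powers p1^(k-l).  Each paper summand equals such a geometric block plus a difference of
  boundary terms (v_l - 1) p1^(v_l - l), and these boundary terms telescope.\<close>

subsection \<open>Expectation as a sum of pass probabilities\<close>

lemma sum_PiE_bernoulli_all_true: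
  fixes p :: real
  assumes "finite N" "P \<subseteq> N"
  shows "(\<Sum>a\<in>PiE N (\<lambda>_. UNIV). (\<Prod>j\<in>N. if a j then p else 1 - p) * of_bool (\<forall>j\<in>P. a j))
         = p ^ card P"
proof -
  define f where "f j b = (if b then p else 1 - p) * of_bool (j \<notin> P \<or> b)" for j b
  have factor: "(\<Prod>j\<in>N. if a j then p else 1 - p) * of_bool (\<forall>j\<in>P. a j) = (\<Prod>j\<in>N. f j (a j))"
    for a
  proof -
    have "of_bool (\<forall>j\<in>P. a j) = (\<Prod>j\<in>N. of_bool (j \<notin> P \<or> a j) :: real)"
      using assms by (auto simp: prod_zero_iff intro!: prod.neutral[symmetric])
    then show ?thesis by (simp add: f_def prod.distrib)
  qed
  have "(\<Sum>a\<in>PiE N (\<lambda>_. UNIV). \<Prod>j\<in>N. f j (a j)) = (\<Prod>j\<in>N. \<Sum>b\<in>UNIV. f j b)"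
    by (rule prod_sum_PiE[symmetric]) (use assms in auto)
  also have "\<dots> = (\<Prod>j\<in>N. if j \<in> P then p else 1)"
    by (rule prod.cong) (auto simp: f_def UNIV_bool)
  also have "\<dots> = p ^ card P"
    using assms by (simp add: prod.If_cases Int_absorb1)
  finally show ?thesis by (simp add: factor)
qed

lemma real_passed_eq_sum: "real (passed m w) = (\<Sum>k=1..m. of_bool (\<forall>j\<in>{1..k}. w j))"
proof -
  have "{k \<in> {1..m}. \<forall>j\<in>{1..k}. w j} = {1..m} \<inter> {k. \<forall>j\<in>{1..k}. w j}" by auto
  then show ?thesis unfolding passed_def by (simp add: of_bool_def sum.If_cases)
qed

definition prob_passes :: "nat \<Rightarrow> nat set \<Rightarrow> (nat \<Rightarrow> bool) \<Rightarrow> real \<Rightarrow> nat \<Rightarrow> real" where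
  "prob_passes m V kn p k =
     of_bool (\<forall>j\<in>V \<inter> {1..k}. kn j) * p ^ card (({1..m} - V) \<inter> {1..k})"

lemma expected_K_eq_sum_prob_passes:
  "expected_K g m V kn p = real g + (\<Sum>k=1..m. prob_passes m V kn p k)"
proof -
  let ?N = "{1..m} - V"
  let ?A = "PiE ?N (\<lambda>_. UNIV)"
  let ?w = "\<lambda>a. \<Prod>j\<in>?N. if a j then p else 1 - p"
  have total: "(\<Sum>a\<in>?A. ?w a) = 1"
    using sum_PiE_bernoulli_all_true[of ?N "{}" p] by simp
  have combine_prefix: "of_bool (\<forall>j\<in>{1..k}. combine V kn a j)
      = of_bool (\<forall>j\<in>V \<inter> {1..k}. kn j) * (of_bool (\<forall>j\<in>?N \<inter> {1..k}. a j) :: real)"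
    if "k \<in> {1..m}" for k a
    using that by (auto simp: combine_def)
  have "expected_K g m V kn p
      = (\<Sum>a\<in>?A. ?w a) * real g + (\<Sum>a\<in>?A. \<Sum>k=1..m. ?w a * of_bool (\<forall>j\<in>{1..k}. combine V kn a j))"
    unfolding expected_K_def of_nat_add real_passed_eq_sum
    by (simp add: sum.distrib sum_distrib_left sum_distrib_right algebra_simps)
  also have "\<dots> = (\<Sum>a\<in>?A. ?w a) * real g + (\<Sum>k=1..m. \<Sum>a\<in>?A. ?w a * of_bool (\<forall>j\<in>{1..k}. combine V kn a j))"
    by (subst sum.swap) (rule refl)
  also have "\<dots> = real g + (\<Sum>k=1..m. prob_passes m V kn p k)"
  proof -
    have "(\<Sum>a\<in>?A. ?w a * of_bool (\<forall>j\<in>{1..k}. combine V kn a j)) = prob_passes m V kn p k"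
      if "k \<in> {1..m}" for k
    proof -
      have "(\<Sum>a\<in>?A. ?w a * of_bool (\<forall>j\<in>{1..k}. combine V kn a j))
          = of_bool (\<forall>j\<in>V \<inter> {1..k}. kn j) * (\<Sum>a\<in>?A. ?w a * of_bool (\<forall>j\<in>?N \<inter> {1..k}. a j))"
        unfolding sum_distrib_left
        by (rule sum.cong[OF refl]) (simp only: combine_prefix[OF that] mult_ac)
      then show ?thesis
        by (simp add: sum_PiE_bernoulli_all_true prob_passes_def)
    qed
    then show ?thesis using total by simp
  qed
  finally show ?thesis .
qed

subsection \<open>The closed-form summands\<close>

lemma geometric_sum_powi:
  fixes p :: real
  assumes "p \<noteq> 0" "a \<le> b"
  shows "(\<Sum>k=a..<b. p powi (int k - int l)) * (1 - p) = p powi (int a - int l) - p powi (int b - int l)"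
  using assms(2)
proof (induction b rule: dec_induct)
  case base
  then show ?case by simp
next
  case (step c)
  have "p powi (int (Suc c) - int l) = p powi ((int c - int l) + 1)"
    by (simp add: algebra_simps)
  also have "\<dots> = p powi (int c - int l) * p"
    using assms(1) by (rule power_int_add_1[OF disjI1])
  finally have power_Suc: "p powi (int (Suc c) - int l) = p powi (int c - int l) * p" .
  have sum_Suc: "(\<Sum>k=a..<Suc c. p powi (int k - int l))
      = (\<Sum>k=a..<c. p powi (int k - int l)) + p powi (int c - int l)"
    using step.hyps(1) by simp
  show ?case
    by (simp only: power_Suc sum_Suc distrib_right step.IH) (simp add: algebra_simps)
qed

text \<open>The l-th summand of the paper's formula, with p2 = 1 - p1, a = v_l and b = v_(l+1).\<close>
definition segment_term :: "real \<Rightarrow> nat \<Rightarrow> nat \<Rightarrow> nat \<Rightarrow> real" where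
  "segment_term p l a b = p powi (1 - int l) / (1 - p) *
     ((p + (1 - p) * real a) * p powi (int a - 1) + (1 - 2 * p - (1 - p) * real b) * p powi (int b - 2))"

definition boundary_term :: "real \<Rightarrow> nat \<Rightarrow> nat \<Rightarrow> real" where
  "boundary_term p l a = (real a - 1) * p powi (int a - int l)"

lemma segment_term_eq_geometric_sum:
  fixes p :: real
  assumes "p \<noteq> 0" "p \<noteq> 1" "a \<le> b"
  shows "segment_term p l a b
    = (\<Sum>k=a..<b. p powi (int k - int l)) + boundary_term p l a - boundary_term p (Suc l) b"
proof -
  define Y where "Y = p powi (int a - int l)"
  define X where "X = p powi (int b - int (Suc l))"
  have Y: "p powi (1 - int l) * p powi (int a - 1) = Y"
    unfolding Y_def using assms(1) by (simp flip: power_int_add)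
  have "int b - int (Suc l) = (1 - int l) + (int b - 2)"
    by simp
  then have X: "p powi (1 - int l) * p powi (int b - 2) = X"
    unfolding X_def by (metis assms(1) power_int_add)
  have "int b - int l = (int b - int (Suc l)) + 1"
    by simp
  then have pX: "p powi (int b - int l) = p * X"
    unfolding X_def by (metis assms(1) power_int_add_1')
  have geometric: "(\<Sum>k=a..<b. p powi (int k - int l)) = (Y - p * X) / (1 - p)"
    using geometric_sum_powi[OF assms(1,3), of l] assms(2)
    by (simp add: Y_def pX field_simps)
  have scaled: "p powi (1 - int l) *
      ((p + (1 - p) * real a) * p powi (int a - 1) + (1 - 2 * p - (1 - p) * real b) * p powi (int b - 2))
      = (p + (1 - p) * real a) * Y + (1 - 2 * p - (1 - p) * real b) * X"
    unfolding Y[symmetric] X[symmetric] by (simp add: algebra_simps)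
  have "segment_term p l a b = ((p + (1 - p) * real a) * Y + (1 - 2 * p - (1 - p) * real b) * X) / (1 - p)"
    unfolding segment_term_def by (simp flip: scaled)
  also have "\<dots> = (Y - p * X) / (1 - p) + (real a - 1) * Y - (real b - 1) * X"
    using assms(2) by (simp add: field_simps)
  finally show ?thesis
    unfolding geometric boundary_term_def Y_def X_def .
qed

lemma sum_atLeastLessThan_blocks:
  fixes f :: "nat \<Rightarrow> 'a::comm_monoid_add"
  assumes "\<And>l. l < t \<Longrightarrow> v l \<le> v (Suc l)"
  shows "(\<Sum>k=v 0..<v t. f k) = (\<Sum>l<t. \<Sum>k=v l..<v (Suc l). f k)"
  using assms
proof (induction t)
  case 0
  then show ?case by simp
next
  case (Suc t)
  have "v 0 \<le> v t"
    using Suc.prems by (induction t) (auto intro: order_trans)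
  moreover have "v t \<le> v (Suc t)"
    using Suc.prems by simp
  ultimately show ?case
    using Suc sum.atLeastLessThan_concat[of "v 0" "v t" "v (Suc t)" f] by simp
qed

subsection \<open>Positions of the communicating vehicles\<close>

text \<open>The sentinel v_0 = 1 may coincide with v_1, so strictness only holds from index 1 on.\<close>
locale sub_queue_positions =
  fixes m T :: nat and v :: "nat \<Rightarrow> nat"
  assumes mono: "mono_on {0..T+1} v"
    and strict: "strict_mono_on {1..T+1} v"
    and first: "v 0 = 1"
    and last: "v (T + 1) = m + 1"
begin

lemma index_le_position: "l \<le> T + 1 \<Longrightarrow> l \<le> v l"
proof (induction l)
  case 0
  then show ?case by simp
next
  case (Suc l)
  show ?case
  proof (cases "l = 0")
    case True
    then show ?thesis using mono first Suc.prems by (auto dest: mono_onD[of _ _ 0 1])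
  next
    case False
    then have "v l < v (Suc l)"
      using Suc.prems by (intro strict_mono_onD[OF strict]) auto
    then show ?thesis using Suc by simp
  qed
qed

lemma position_le_length: "l \<in> {1..T} \<Longrightarrow> v l \<le> m"
  using strict_mono_onD[OF strict, of l "T + 1"] last by auto

lemma known_positions_below:
  assumes "l \<le> T" "v l \<le> k" "k < v (Suc l)"
  shows "v ` {1..T} \<inter> {1..k} = v ` {1..l}"
proof
  show "v ` {1..T} \<inter> {1..k} \<subseteq> v ` {1..l}"
  proof
    fix x assume "x \<in> v ` {1..T} \<inter> {1..k}"
    then obtain j where j: "j \<in> {1..T}" "x = v j" "v j \<le> k" by auto
    have "j \<le> l"
    proof (rule ccontr)
      assume "\<not> j \<le> l"
      then have "v (Suc l) \<le> v j"
        using j(1) by (intro mono_onD[OF mono]) auto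
      with j(3) assms(3) show False by simp
    qed
    with j show "x \<in> v ` {1..l}" by auto
  qed
  show "v ` {1..l} \<subseteq> v ` {1..T} \<inter> {1..k}"
  proof
    fix x assume "x \<in> v ` {1..l}"
    then obtain j where j: "j \<in> {1..l}" "x = v j" by auto
    have "v j \<le> v l"
      using j(1) assms(1) by (intro mono_onD[OF mono]) auto
    moreover have "1 \<le> v j"
      using index_le_position[of j] j(1) assms(1) by simp
    ultimately show "x \<in> v ` {1..T} \<inter> {1..k}"
      using j assms(1,2) by auto
  qed
qed

lemma card_unknown_positions_below:
  assumes "l \<le> T" "v l \<le> k" "k < v (Suc l)"
  shows "card (({1..m} - v ` {1..T}) \<inter> {1..k}) = k - l"
proof -
  have "k \<le> m"
    using assms mono_onD[OF mono, of "Suc l" "T + 1"] last by auto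
  then have "({1..m} - v ` {1..T}) \<inter> {1..k} = {1..k} - v ` {1..l}"
    using known_positions_below[OF assms] by auto
  moreover have "inj_on v {1..l}"
    using assms(1) by (auto intro: strict_mono_on_imp_inj_on[OF strict] inj_on_subset)
  moreover have "v ` {1..l} \<subseteq> {1..k}"
    using known_positions_below[OF assms] by auto
  ultimately show ?thesis
    by (simp add: card_Diff_subset card_image)
qed

lemma prob_passes_in_block:
  fixes p :: real
  assumes "l \<le> T" "v l \<le> k" "k < v (Suc l)" "\<forall>j\<in>{1..l}. kn (v j)"
  shows "prob_passes m (v ` {1..T}) kn p k = p powi (int k - int l)"
proof -
  have "l \<le> k"
    using index_le_position[of l] assms(1,2) by simp
  moreover have "\<forall>j\<in>v ` {1..T} \<inter> {1..k}. kn j"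
    using known_positions_below[OF assms(1-3)] assms(4) by auto
  ultimately show ?thesis
    unfolding prob_passes_def card_unknown_positions_below[OF assms(1-3)]
    by (simp add: power_int_def nat_diff_distrib)
qed

lemma prob_passes_blocked:
  assumes "L \<in> {1..T}" "\<not> kn (v L)" "v L \<le> k"
  shows "prob_passes m (v ` {1..T}) kn p k = 0"
proof -
  have "v L \<in> v ` {1..T} \<inter> {1..k}"
    using assms index_le_position[of L] by auto
  with assms(2) show ?thesis
    unfolding prob_passes_def by auto
qed

lemma sum_prob_passes_before:
  fixes p :: real
  assumes "p \<noteq> 0" "p \<noteq> 1" "t \<le> T + 1" "\<forall>j\<in>{1..<t}. kn (v j)"
  shows "(\<Sum>k=1..<v t. prob_passes m (v ` {1..T}) kn p k)
    = (\<Sum>l<t. segment_term p l (v l) (v (Suc l))) + boundary_term p t (v t)"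
proof -
  let ?B = "boundary_term p"
  have step: "v l \<le> v (Suc l)" if "l < t" for l
    using that assms(3) by (intro mono_onD[OF mono]) auto
  have "(\<Sum>k=1..<v t. prob_passes m (v ` {1..T}) kn p k)
      = (\<Sum>l<t. \<Sum>k=v l..<v (Suc l). prob_passes m (v ` {1..T}) kn p k)"
    using sum_atLeastLessThan_blocks[of t v, OF step] first by simp
  also have "\<dots> = (\<Sum>l<t. \<Sum>k=v l..<v (Suc l). p powi (int k - int l))"
    using assms(3,4) by (intro sum.cong refl prob_passes_in_block) auto
  also have "\<dots> = (\<Sum>l<t. segment_term p l (v l) (v (Suc l)) + (?B (Suc l) (v (Suc l)) - ?B l (v l)))"
    using step by (intro sum.cong refl) (simp add: segment_term_eq_geometric_sum assms(1,2))
  also have "\<dots> = (\<Sum>l<t. segment_term p l (v l) (v (Suc l))) + (?B t (v t) - ?B 0 (v 0))"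
    by (simp add: sum.distrib sum_lessThan_telescope[of "\<lambda>l. ?B l (v l)"])
  finally show ?thesis
    by (simp add: first boundary_term_def)
qed

lemma sum_prob_passes_all_permitted:
  fixes p :: real
  assumes "p \<noteq> 0" "p \<noteq> 1" "\<forall>l\<in>{1..T}. kn (v l)"
  shows "(\<Sum>k=1..m. prob_passes m (v ` {1..T}) kn p k)
    = (\<Sum>l=0..T. segment_term p l (v l) (v (Suc l))) + real m * p powi (int m - int T)"
proof -
  have "{1..m} = {1..<v (T + 1)}"
    using last by auto
  then show ?thesis
    using sum_prob_passes_before[OF assms(1,2), of "T + 1" kn] assms(3) last
    by (simp add: boundary_term_def atLeast0AtMost lessThan_Suc_atMost)
qed

lemma sum_prob_passes_first_blocked:
  fixes p :: real
  assumes "p \<noteq> 0" "p \<noteq> 1" "L \<in> {1..T}" "\<not> kn (v L)" "\<forall>l\<in>{1..<L}. kn (v l)"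
  shows "(\<Sum>k=1..m. prob_passes m (v ` {1..T}) kn p k)
    = (\<Sum>l=0..L - 1. segment_term p l (v l) (v (Suc l))) + boundary_term p L (v L)"
proof -
  have "1 \<le> v L" "v L \<le> m + 1"
    using index_le_position[of L] position_le_length[of L] assms(3) by auto
  then have "(\<Sum>k=1..m. prob_passes m (v ` {1..T}) kn p k)
      = (\<Sum>k=1..<v L. prob_passes m (v ` {1..T}) kn p k) + (\<Sum>k=v L..<m + 1. prob_passes m (v ` {1..T}) kn p k)"
    using sum.atLeastLessThan_concat[of 1 "v L" "m + 1" "prob_passes m (v ` {1..T}) kn p"]
    by (simp add: atLeastLessThanSuc_atLeastAtMost)
  also have "(\<Sum>k=v L..<m + 1. prob_passes m (v ` {1..T}) kn p k) = 0"
    using assms(3,4) by (intro sum.neutral ballI prob_passes_blocked) auto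
  also have "(\<Sum>k=1..<v L. prob_passes m (v ` {1..T}) kn p k)
      = (\<Sum>l<L. segment_term p l (v l) (v (Suc l))) + boundary_term p L (v L)"
    using sum_prob_passes_before[OF assms(1,2), of L kn] assms(3,5) by simp
  also have "{..<L} = {0..L - 1}"
    using assms(3) by auto
  finally show ?thesis by simp
qed

end

lemma sub_queue_positionsI:
  assumes "strict_mono_on {1..T} v" "\<forall>l\<in>{1..T}. 1 \<le> v l \<and> v l \<le> m"
    and "v 0 = 1" "v (T + 1) = m + 1"
  shows "sub_queue_positions m T v"
proof
  show strict: "strict_mono_on {1..T+1} v"
  proof (rule strict_mono_onI)
    fix i j assume ij: "i \<in> {1..T+1}" "j \<in> {1..T+1}" "i < j"
    show "v i < v j"
    proof (cases "j = T + 1")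
      case True
      have "v i \<le> m"
        using ij True assms(2) by auto
      with True assms(4) show ?thesis by simp
    next
      case False
      with ij show ?thesis by (auto intro: strict_mono_onD[OF assms(1)])
    qed
  qed
  show "mono_on {0..T+1} v"
  proof (rule mono_onI)
    fix i j assume ij: "i \<in> {0..T+1}" "j \<in> {0..T+1}" "i \<le> j"
    have "1 \<le> v j"
      using ij assms(2-4) by (cases "j = 0 \<or> j = T + 1") auto
    with ij assms(3) strict_mono_on_leD[OF strict] show "v i \<le> v j"
      by (cases "i = 0") auto
  qed
qed (use assms in auto)

theorem theorem2:
  fixes c :: conf and n T :: nat and v :: "nat \<Rightarrow> nat" and kn :: "nat \<Rightarrow> bool"
    and p1 p2 :: real
  assumes hg: "g_of c \<le> n"
    and hT: "T \<le> n - g_of c"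
    and hv_mono: "strict_mono_on {1..T} v"
    and hv_range: "\<forall>l\<in>{1..T}. 1 \<le> v l \<and> v l \<le> n - g_of c"
    and hv0: "v 0 = 1"
    and hvT: "v (T + 1) = n - g_of c + 1"
    and hp1: "0 < p1" "p1 < 1"
    and hp2: "p2 = 1 - p1"
  shows
    "((\<forall>l\<in>{1..T}. kn (v l)) \<longrightarrow>
        expected_K (g_of c) (n - g_of c) (v ` {1..T}) kn p1 =
          real (g_of c)
          + (\<Sum>l = 0..T. p1 powi (1 - int l) / p2 *
               ((p1 + p2 * real (v l)) * p1 powi (int (v l) - 1)
                + (1 - 2 * p1 - p2 * real (v (l + 1))) * p1 powi (int (v (l + 1)) - 2)))
          + real (n - g_of c) * p1 powi (int (n - g_of c) - int T))
     \<and>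
     (\<forall>L\<in>{1..T}. (\<not> kn (v L) \<and> (\<forall>l\<in>{1..<L}. kn (v l))) \<longrightarrow>
        expected_K (g_of c) (n - g_of c) (v ` {1..T}) kn p1 =
          real (g_of c)
          + (\<Sum>l = 0..L - 1. p1 powi (1 - int l) / p2 *
               ((p1 + p2 * real (v l)) * p1 powi (int (v l) - 1)
                + (1 - 2 * p1 - p2 * real (v (l + 1))) * p1 powi (int (v (l + 1)) - 2)))
          + (real (v L) - 1) * p1 powi (int (v L) - int L))"
proof -
  interpret sub_queue_positions "n - g_of c" T v
    by (rule sub_queue_positionsI) (use assms in auto)
  have p1: "p1 \<noteq> 0" "p1 \<noteq> 1"
    using hp1 by auto
  show ?thesis
    unfolding expected_K_eq_sum_prob_passes
    using sum_prob_passes_all_permitted[OF p1, of kn] sum_prob_passes_first_blocked[OF p1, of _ kn]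
    by (simp add: hp2 segment_term_def boundary_term_def)
qed

end
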